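(* Let $\mathscr T$ be a functor satisfying (T1)–(T4). Then $\Gamma$, defined on objects by $\Gamma(\mathcal M)=\mathscr P(\mathscr T(\mathbf{Lin}(\mathcal M)))$ and on morphisms by $\Gamma(k)(A)=\{k\circ a\circ k^{-1}\mid a\in A\}$, is a functor from $\mathbb{COL}$ to $\mathscr T\mathbb{ODA}$.
   Context: An involutive unital quantale is $(Q,\bigsqcup,\odot,{}^*,e)$: complete join-semilattice $Q$, associative $\odot$ distributing over arbitrary joins in each argument, unit $e$, ${}^*$ with $x^{**}=x$, $(x\odot y)^*=y^*\odot x^*$, $(\bigsqcup x_i)^*=\bigsqcup x_i^*$. An involutive generalized dynamic algebra (IDA) is such a quantale with ${\sim}\colon K\to K$ satisfying, for all $x,y$ and families $(x_i)$: ${\sim}(x\odot{\sim}{\sim}y)={\sim}(x\odot y)$; ${\sim}(\bigsqcup{\sim}{\sim}x_i)={\sim}(\bigsqcup x_i)$; $({\sim}x)^*={\sim}x$; ${\sim}{\sim}({\sim}{\sim}x\odot y)={\sim}({\sim}x\sqcup{\sim}({\sim}x\sqcup y))$. Test set $\widetilde K=\{{\sim}k\}$; $\bigvee W={\sim}{\sim}\bigsqcup W$; $w^\perp={\sim}w$; $k\preceq l$ iff $\bigvee\{k,l\}=l$; $k\bullet v={\sim}{\sim}(k\odot v)$; $k\equiv l$ iff $k\bullet w=l\bullet w$ for all $w\in\widetilde K$. IDA morphisms preserve arbitrary joins, $\odot$, ${}^*$, unit, ${\sim}$ (category $\mathbb{IDA}$); semi-Foulis means $(\widetilde K,\preceq,{}^\perp)$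 is a complete orthomodular lattice. $\mathbb{IM}$: involutive monoids and homomorphisms. For a complete orthomodular lattice $\mathcal M$: $\pi_m(x)=m\wedge(m^\perp\vee x)$; $\mathbf{Lin}(\mathcal M)$ is the set of maps $f$ admitting $f^*$ with $f(x)\le y^\perp\iff x\le f^*(y)^\perp$, an IDA under pointwise joins, composition, ${}^*$, $\mathrm{id}$, ${\sim}f=\pi_{f(1)^\perp}$. For an involutive submonoid $L\supseteq\{\pi_m\}$, $\mathscr P(L)$ is the IDA of subsets of $L$ with union, $A\odot B=\{a\circ b\}$, $A^*=\{a^*\}$, unit $\{\mathrm{id}_M\}$, ${\sim}A=\{\pi_{(\bigvee_{a\in A}a(1))^\perp}\}$. $\mathscr T\colon\mathbb{IDA}\to\mathbb{IM}$ satisfies: (T1) $\widetilde K\subseteq\mathscr T(K)\subseteq K$, $\mathscr T(K)$ an involutive submonoid; (T2) for semi-Foulis $\mathfrak K$ with $s=t\iff s\equiv t$ on $\mathscr T(K)$, $k\mapsto k\bullet(-)$ is an isomorphism $\mathscr T(\mathfrak K)\to\mathscr T(\mathbf{Lin}(\widetilde{\mathfrak K}))$; (T3) $f\mapsto\{f\}$ is an isomorphism $\mathscr T(\mathbf{Lin}(\mathcal M))\to\mathscr T(\mathscr P(\mathscr T(\mathbf{Lin}(\mathcal M))))$; (T4) $\mathscr T(f)$ is the restriction of $f$. A $\mathscr T$-based orthomodular dynamic algebra is an IDA with: (TODA1) $(\widetilde K,\preceq,{}^\perp)$ a complete orthomodular lattice; (TODA2) every $A$ with $\mathscr T(K)\subseteq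 A\subseteq K$ closed under $\odot$, ${}^*$, arbitrary joins equals $K$; (TODA3) for $S,T\subseteq\mathscr T(K)$, $\bigsqcup S=\bigsqcup T$ iff $S=T$; (TODA4) for $s,t\in\mathscr T(K)$, $s=t$ iff $s\equiv t$. $\mathscr T\mathbb{ODA}$: these objects with bijective IDA morphisms. $\mathbb{COL}$: complete orthomodular lattices with ortholattice isomorphisms (bijections $g$ with $m\le n\iff g(m)\le g(n)$, $g(m^\perp)=g(m)^\perp$). *)

theory Defs
  imports Main
begin

definition o_is_lub :: "'a set \<Rightarrow> ('a \<Rightarrow> 'a \<Rightarrow> bool) \<Rightarrow> 'a set \<Rightarrow> 'a \<Rightarrow> bool" where
  "o_is_lub C le S s \<longleftrightarrow> s \<in> C \<and> (\<forall>x\<in>S. le x s) \<and> (\<forall>u\<in>C. (\<forall>x\<in>S. le x u) \<longrightarrow> le s u)"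

definition o_is_glb :: "'a set \<Rightarrow> ('a \<Rightarrow> 'a \<Rightarrow> bool) \<Rightarrow> 'a set \<Rightarrow> 'a \<Rightarrow> bool" where
  "o_is_glb C le S s \<longleftrightarrow> s \<in> C \<and> (\<forall>x\<in>S. le s x) \<and> (\<forall>u\<in>C. (\<forall>x\<in>S. le u x) \<longrightarrow> le u s)"

definition o_lub :: "'a set \<Rightarrow> ('a \<Rightarrow> 'a \<Rightarrow> bool) \<Rightarrow> 'a set \<Rightarrow> 'a" where
  "o_lub C le S = (THE s. o_is_lub C le S s)"

definition o_glb :: "'a set \<Rightarrow> ('a \<Rightarrow> 'a \<Rightarrow> bool) \<Rightarrow> 'a set \<Rightarrow> 'a" where
  "o_glb C le S = (THE s. o_is_glb C le S s)"

definition o_top :: "'a set \<Rightarrow> ('a \<Rightarrow> 'a \<Rightarrow> bool) \<Rightarrow> 'a" where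
  "o_top C le = o_lub C le C"

definition o_bot :: "'a set \<Rightarrow> ('a \<Rightarrow> 'a \<Rightarrow> bool) \<Rightarrow> 'a" where
  "o_bot C le = o_lub C le {}"

definition o_partial_order :: "'a set \<Rightarrow> ('a \<Rightarrow> 'a \<Rightarrow> bool) \<Rightarrow> bool" where
  "o_partial_order C le \<longleftrightarrow>
     (\<forall>x\<in>C. le x x) \<and>
     (\<forall>x\<in>C. \<forall>y\<in>C. le x y \<and> le y x \<longrightarrow> x = y) \<and>
     (\<forall>x\<in>C. \<forall>y\<in>C. \<forall>z\<in>C. le x y \<and> le y z \<longrightarrow> le x z)"

definition o_complete_lattice :: "'a set \<Rightarrow> ('a \<Rightarrow> 'a \<Rightarrow> bool) \<Rightarrow> bool" where
  "o_complete_lattice C le \<longleftrightarrow> o_partial_order C le \<and> (\<forall>S\<subseteq>C. \<exists>s. o_is_lub C le S s)"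

definition col :: "'a set \<Rightarrow> ('a \<Rightarrow> 'a \<Rightarrow> bool) \<Rightarrow> ('a \<Rightarrow> 'a) \<Rightarrow> bool" where
  "col C le perp \<longleftrightarrow>
     o_complete_lattice C le \<and>
     (\<forall>x\<in>C. perp x \<in> C \<and> perp (perp x) = x) \<and>
     (\<forall>x\<in>C. \<forall>y\<in>C. le x y \<longrightarrow> le (perp y) (perp x)) \<and>
     (\<forall>x\<in>C. o_lub C le {x, perp x} = o_top C le \<and> o_glb C le {x, perp x} = o_bot C le) \<and>
     (\<forall>x\<in>C. \<forall>y\<in>C. le x y \<longrightarrow> y = o_lub C le {x, o_glb C le {y, perp x}})"

definition col_iso :: "('a \<Rightarrow> 'a \<Rightarrow> bool) \<Rightarrow> ('a \<Rightarrow> 'a) \<Rightarrow> ('b \<Rightarrow> 'b \<Rightarrow> bool) \<Rightarrow> ('b \<Rightarrow> 'b) \<Rightarrow> ('a \<Rightarrow> 'b) \<Rightarrow> bool" where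
  "col_iso le perp le' perp' g \<longleftrightarrow> bij g \<and> (\<forall>m n. le m n \<longleftrightarrow> le' (g m) (g n)) \<and> (\<forall>m. g (perp m) = perp' (g m))"

section \<open>Involutive generalized dynamic algebras\<close>

record 'a ida =
  ida_car :: "'a set"
  ida_join :: "'a set \<Rightarrow> 'a"
  ida_mult :: "'a \<Rightarrow> 'a \<Rightarrow> 'a"
  ida_star :: "'a \<Rightarrow> 'a"
  ida_unit :: "'a"
  ida_neg :: "'a \<Rightarrow> 'a"

definition cjsl :: "'a set \<Rightarrow> ('a set \<Rightarrow> 'a) \<Rightarrow> bool" where
  "cjsl C J \<longleftrightarrow> (\<forall>S\<subseteq>C. J S \<in> C) \<and> o_partial_order C (\<lambda>x y. J {x, y} = y) \<and>
     (\<forall>S\<subseteq>C. o_is_lub C (\<lambda>x y. J {x, y} = y) S (J S))"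

definition ida :: "'a ida \<Rightarrow> bool" where
  "ida K \<longleftrightarrow>
    (let C = ida_car K; J = ida_join K; m = ida_mult K; s = ida_star K; e = ida_unit K; n = ida_neg K in
     cjsl C J \<and>
     (\<forall>x\<in>C. \<forall>y\<in>C. m x y \<in> C) \<and>
     (\<forall>x\<in>C. \<forall>y\<in>C. \<forall>z\<in>C. m (m x y) z = m x (m y z)) \<and>
     (\<forall>x\<in>C. \<forall>S\<subseteq>C. m x (J S) = J ((\<lambda>y. m x y) ` S) \<and> m (J S) x = J ((\<lambda>y. m y x) ` S)) \<and>
     e \<in> C \<and> (\<forall>x\<in>C. m e x = x \<and> m x e = x) \<and>
     (\<forall>x\<in>C. s x \<in> C \<and> s (s x) = x) \<and>
     (\<forall>x\<in>C. \<forall>y\<in>C. s (m x y) = m (s y) (s x)) \<and>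
     (\<forall>S\<subseteq>C. s (J S) = J (s ` S)) \<and>
     (\<forall>x\<in>C. n x \<in> C) \<and>
     (\<forall>x\<in>C. \<forall>y\<in>C. n (m x (n (n y))) = n (m x y)) \<and>
     (\<forall>S\<subseteq>C. n (J ((\<lambda>x. n (n x)) ` S)) = n (J S)) \<and>
     (\<forall>x\<in>C. s (n x) = n x) \<and>
     (\<forall>x\<in>C. \<forall>y\<in>C. n (n (m (n (n x)) y)) = n (J {n x, n (J {n x, y})})))"

definition tests :: "'a ida \<Rightarrow> 'a set" where
  "tests K = ida_neg K ` ida_car K"

definition tvee :: "'a ida \<Rightarrow> 'a set \<Rightarrow> 'a" where
  "tvee K W = ida_neg K (ida_neg K (ida_join K W))"

definition tle :: "'a ida \<Rightarrow> 'a \<Rightarrow> 'a \<Rightarrow> bool" where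
  "tle K k l \<longleftrightarrow> tvee K {k, l} = l"

definition bullet :: "'a ida \<Rightarrow> 'a \<Rightarrow> 'a \<Rightarrow> 'a" where
  "bullet K k v = ida_neg K (ida_neg K (ida_mult K k v))"

definition tequiv :: "'a ida \<Rightarrow> 'a \<Rightarrow> 'a \<Rightarrow> bool" where
  "tequiv K k l \<longleftrightarrow> (\<forall>w\<in>tests K. bullet K k w = bullet K l w)"

definition semi_foulis :: "'a ida \<Rightarrow> bool" where
  "semi_foulis K \<longleftrightarrow> ida K \<and> col (tests K) (tle K) (ida_neg K)"

definition ida_hom :: "'a ida \<Rightarrow> 'b ida \<Rightarrow> ('a \<Rightarrow> 'b) \<Rightarrow> bool" where
  "ida_hom K L f \<longleftrightarrow>
     f ` ida_car K \<subseteq> ida_car L \<and>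
     (\<forall>S\<subseteq>ida_car K. f (ida_join K S) = ida_join L (f ` S)) \<and>
     (\<forall>x\<in>ida_car K. \<forall>y\<in>ida_car K. f (ida_mult K x y) = ida_mult L (f x) (f y)) \<and>
     (\<forall>x\<in>ida_car K. f (ida_star K x) = ida_star L (f x)) \<and>
     f (ida_unit K) = ida_unit L \<and>
     (\<forall>x\<in>ida_car K. f (ida_neg K x) = ida_neg L (f x))"

definition inv_submonoid :: "'a ida \<Rightarrow> 'a set \<Rightarrow> bool" where
  "inv_submonoid K A \<longleftrightarrow> A \<subseteq> ida_car K \<and> ida_unit K \<in> A \<and>
     (\<forall>x\<in>A. \<forall>y\<in>A. ida_mult K x y \<in> A) \<and> (\<forall>x\<in>A. ida_star K x \<in> A)"

definition im_iso :: "'a ida \<Rightarrow> 'a set \<Rightarrow> 'b ida \<Rightarrow> 'b set \<Rightarrow> ('a \<Rightarrow> 'b) \<Rightarrow> bool" where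
  "im_iso K A L B h \<longleftrightarrow> bij_betw h A B \<and>
     (\<forall>x\<in>A. \<forall>y\<in>A. h (ida_mult K x y) = ida_mult L (h x) (h y)) \<and>
     (\<forall>x\<in>A. h (ida_star K x) = ida_star L (h x)) \<and>
     h (ida_unit K) = ida_unit L"

section \<open>The IDAs Lin(M) and P(L)\<close>

definition ext_map :: "'a set \<Rightarrow> ('a \<Rightarrow> 'a) \<Rightarrow> bool" where
  "ext_map C f \<longleftrightarrow> (\<forall>x\<in>C. f x \<in> C) \<and> (\<forall>x. x \<notin> C \<longrightarrow> f x = x)"

definition is_adjoint :: "'a set \<Rightarrow> ('a \<Rightarrow> 'a \<Rightarrow> bool) \<Rightarrow> ('a \<Rightarrow> 'a) \<Rightarrow> ('a \<Rightarrow> 'a) \<Rightarrow> ('a \<Rightarrow> 'a) \<Rightarrow> bool" where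
  "is_adjoint C le perp f g \<longleftrightarrow> (\<forall>x\<in>C. \<forall>y\<in>C. le (f x) (perp y) \<longleftrightarrow> le x (perp (g y)))"

definition proj :: "'a set \<Rightarrow> ('a \<Rightarrow> 'a \<Rightarrow> bool) \<Rightarrow> ('a \<Rightarrow> 'a) \<Rightarrow> 'a \<Rightarrow> 'a \<Rightarrow> 'a" where
  "proj C le perp m x = (if x \<in> C then o_glb C le {m, o_lub C le {perp m, x}} else x)"

definition lin_car :: "'a set \<Rightarrow> ('a \<Rightarrow> 'a \<Rightarrow> bool) \<Rightarrow> ('a \<Rightarrow> 'a) \<Rightarrow> ('a \<Rightarrow> 'a) set" where
  "lin_car C le perp = {f. ext_map C f \<and> (\<exists>g. ext_map C g \<and> is_adjoint C le perp f g)}"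

definition lin_adj :: "'a set \<Rightarrow> ('a \<Rightarrow> 'a \<Rightarrow> bool) \<Rightarrow> ('a \<Rightarrow> 'a) \<Rightarrow> ('a \<Rightarrow> 'a) \<Rightarrow> ('a \<Rightarrow> 'a)" where
  "lin_adj C le perp f = (THE g. ext_map C g \<and> is_adjoint C le perp f g)"

definition Lin :: "'a set \<Rightarrow> ('a \<Rightarrow> 'a \<Rightarrow> bool) \<Rightarrow> ('a \<Rightarrow> 'a) \<Rightarrow> ('a \<Rightarrow> 'a) ida" where
  "Lin C le perp =
    \<lparr> ida_car = lin_car C le perp,
      ida_join = (\<lambda>S x. if x \<in> C then o_lub C le ((\<lambda>f. f x) ` S) else x),
      ida_mult = (\<lambda>f g. f \<circ> g),
      ida_star = lin_adj C le perp,
      ida_unit = id,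
      ida_neg = (\<lambda>f. proj C le perp (perp (f (o_top C le)))) \<rparr>"

definition Pw :: "'a set \<Rightarrow> ('a \<Rightarrow> 'a \<Rightarrow> bool) \<Rightarrow> ('a \<Rightarrow> 'a) \<Rightarrow> ('a \<Rightarrow> 'a) set \<Rightarrow> ('a \<Rightarrow> 'a) set ida" where
  "Pw C le perp L =
    \<lparr> ida_car = Pow L,
      ida_join = (\<lambda>S. \<Union>S),
      ida_mult = (\<lambda>A B. {a \<circ> b | a b. a \<in> A \<and> b \<in> B}),
      ida_star = (\<lambda>A. lin_adj C le perp ` A),
      ida_unit = {id},
      ida_neg = (\<lambda>A. {proj C le perp (perp (o_lub C le ((\<lambda>a. a (o_top C le)) ` A)))}) \<rparr>"

section \<open>The conditions (T1)--(T4) on the object part of the functor T\<close>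

definition T_ax1 :: "('a ida \<Rightarrow> 'a set) \<Rightarrow> bool" where
  "T_ax1 T \<longleftrightarrow> (\<forall>K. ida K \<longrightarrow> tests K \<subseteq> T K \<and> inv_submonoid K (T K))"

definition T_ax2 :: "('a ida \<Rightarrow> 'a set) \<Rightarrow> (('a \<Rightarrow> 'a) ida \<Rightarrow> ('a \<Rightarrow> 'a) set) \<Rightarrow> bool" where
  "T_ax2 TK TL \<longleftrightarrow>
    (\<forall>K. semi_foulis K \<and> (\<forall>s\<in>TK K. \<forall>t\<in>TK K. s = t \<longleftrightarrow> tequiv K s t) \<longrightarrow>
       im_iso K (TK K) (Lin (tests K) (tle K) (ida_neg K)) (TL (Lin (tests K) (tle K) (ida_neg K)))
         (\<lambda>k v. if v \<in> tests K then bullet K k v else v))"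

definition T_ax3 :: "(('a \<Rightarrow> 'a) ida \<Rightarrow> ('a \<Rightarrow> 'a) set) \<Rightarrow> (('a \<Rightarrow> 'a) set ida \<Rightarrow> ('a \<Rightarrow> 'a) set set) \<Rightarrow> bool" where
  "T_ax3 TL TP \<longleftrightarrow>
    (\<forall>C le perp. col C le perp \<longrightarrow>
       im_iso (Lin C le perp) (TL (Lin C le perp))
              (Pw C le perp (TL (Lin C le perp))) (TP (Pw C le perp (TL (Lin C le perp))))
              (\<lambda>f. {f}))"

text \<open>(T4): T(f) is the restriction of f; in particular f maps T(K) into T(L).\<close>
definition T_ax4 :: "('a ida \<Rightarrow> 'a set) \<Rightarrow> ('b ida \<Rightarrow> 'b set) \<Rightarrow> bool" where
  "T_ax4 T T' \<longleftrightarrow> (\<forall>K L f. ida K \<and> ida L \<and> ida_hom K L f \<longrightarrow> f ` T K \<subseteq> T' L)"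

section \<open>T-based orthomodular dynamic algebras and the functor Gamma\<close>

definition ida_closed :: "'a ida \<Rightarrow> 'a set \<Rightarrow> bool" where
  "ida_closed K A \<longleftrightarrow> (\<forall>x\<in>A. \<forall>y\<in>A. ida_mult K x y \<in> A) \<and> (\<forall>x\<in>A. ida_star K x \<in> A) \<and>
     (\<forall>S\<subseteq>A. ida_join K S \<in> A)"

definition toda :: "('a ida \<Rightarrow> 'a set) \<Rightarrow> 'a ida \<Rightarrow> bool" where
  "toda T K \<longleftrightarrow> ida K \<and>
     col (tests K) (tle K) (ida_neg K) \<and>
     (\<forall>A. T K \<subseteq> A \<and> A \<subseteq> ida_car K \<and> ida_closed K A \<longrightarrow> A = ida_car K) \<and>
     (\<forall>S U. S \<subseteq> T K \<and> U \<subseteq> T K \<longrightarrow> (ida_join K S = ida_join K U \<longleftrightarrow> S = U)) \<and>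
     (\<forall>s\<in>T K. \<forall>t\<in>T K. s = t \<longleftrightarrow> tequiv K s t)"

definition toda_morph :: "'a ida \<Rightarrow> 'b ida \<Rightarrow> ('a \<Rightarrow> 'b) \<Rightarrow> bool" where
  "toda_morph K L f \<longleftrightarrow> ida_hom K L f \<and> bij_betw f (ida_car K) (ida_car L)"

text \<open>Gamma on objects: a COL object is a complete OML whose carrier is a whole type.\<close>
definition Gamma :: "(('a \<Rightarrow> 'a) ida \<Rightarrow> ('a \<Rightarrow> 'a) set) \<Rightarrow> ('a \<Rightarrow> 'a \<Rightarrow> bool) \<Rightarrow> ('a \<Rightarrow> 'a) \<Rightarrow> ('a \<Rightarrow> 'a) set ida" where
  "Gamma TL le perp = Pw UNIV le perp (TL (Lin UNIV le perp))"

definition gamma_map :: "('a \<Rightarrow> 'b) \<Rightarrow> ('a \<Rightarrow> 'a) set \<Rightarrow> ('b \<Rightarrow> 'b) set" where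
  "gamma_map k A = (\<lambda>a. k \<circ> a \<circ> inv k) ` A"

end

theory Submission
  imports Defs
begin

text \<open>
  For a complete orthomodular lattice M, the maps with an adjoint form the IDA Lin(M), whose
  negation sends f to the Sasaki projection pi onto the orthocomplement of f(1). For an involutive
  submonoid L of Lin(M) containing all Sasaki projections, P(L) is an IDA whose tests are exactly
  the singletons {pi_m}, and m |-> {pi_m} is an ortholattice isomorphism from M onto them; this is
  (TODA1). For L = T(Lin(M)), (T3) says that T(P(L)) consists of the singletons {f} with f in L.
  Every subset of L is the union of its singletons, which gives (TODA2) and (TODA3), and
  {f} . {pi_m} = {pi_(f m)} shows that tests separate singletons, which is (TODA4).
  An ortholattice isomorphism k makes conjugation f |-> k o f o k^-1 an IDA isomorphism
  Lin(M) -> Lin(M'); (T4), applied to it and to its inverse, restricts it to a bijection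
  T(Lin(M)) -> T(Lin(M')), whose direct image is Gamma(k). Only (T1), (T3) and (T4) for T on
  IDAs of the form Lin(M) are used.
\<close>

lemma o_lub_eqI:
  assumes "\<And>x y. x \<in> C \<Longrightarrow> y \<in> C \<Longrightarrow> le x y \<Longrightarrow> le y x \<Longrightarrow> x = y"
    and "o_is_lub C le S s"
  shows "o_lub C le S = s"
  unfolding o_lub_def
  by (rule the_equality) (use assms in \<open>unfold o_is_lub_def, blast\<close>)+

lemma o_glb_eqI:
  assumes "\<And>x y. x \<in> C \<Longrightarrow> y \<in> C \<Longrightarrow> le x y \<Longrightarrow> le y x \<Longrightarrow> x = y"
    and "o_is_glb C le S s"
  shows "o_glb C le S = s"
  unfolding o_glb_def
  by (rule the_equality) (use assms in \<open>unfold o_is_glb_def, blast\<close>)+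

definition comp_set :: "('b \<Rightarrow> 'c) set \<Rightarrow> ('a \<Rightarrow> 'b) set \<Rightarrow> ('a \<Rightarrow> 'c) set" where
  "comp_set A B = {a \<circ> b | a b. a \<in> A \<and> b \<in> B}"

lemma comp_set_assoc: "comp_set (comp_set A B) C = comp_set A (comp_set B C)"
proof (rule set_eqI)
  fix u
  have "u \<in> comp_set (comp_set A B) C \<longleftrightarrow> (\<exists>a\<in>A. \<exists>b\<in>B. \<exists>c\<in>C. u = a \<circ> b \<circ> c)"
    unfolding comp_set_def by blast
  also have "\<dots> \<longleftrightarrow> u \<in> comp_set A (comp_set B C)"
    unfolding comp_set_def comp_assoc by blast
  finally show "u \<in> comp_set (comp_set A B) C \<longleftrightarrow> u \<in> comp_set A (comp_set B C)" .
qed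

lemma image_comp_set:
  assumes "\<And>a b. a \<in> A \<Longrightarrow> b \<in> B \<Longrightarrow> h (a \<circ> b) = h a \<circ> h b"
  shows "h ` comp_set A B = comp_set (h ` A) (h ` B)"
proof (rule set_eqI)
  fix u
  have "u \<in> h ` comp_set A B \<longleftrightarrow> (\<exists>a\<in>A. \<exists>b\<in>B. u = h (a \<circ> b))"
    unfolding comp_set_def by blast
  also have "\<dots> \<longleftrightarrow> (\<exists>a\<in>A. \<exists>b\<in>B. u = h a \<circ> h b)"
    using assms by metis
  also have "\<dots> \<longleftrightarrow> u \<in> comp_set (h ` A) (h ` B)"
    unfolding comp_set_def by blast
  finally show "u \<in> h ` comp_set A B \<longleftrightarrow> u \<in> comp_set (h ` A) (h ` B)" .
qed

lemma image_comp_set_rev: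
  assumes "\<And>a b. a \<in> A \<Longrightarrow> b \<in> B \<Longrightarrow> h (a \<circ> b) = h b \<circ> h a"
  shows "h ` comp_set A B = comp_set (h ` B) (h ` A)"
proof (rule set_eqI)
  fix u
  have "u \<in> h ` comp_set A B \<longleftrightarrow> (\<exists>a\<in>A. \<exists>b\<in>B. u = h (a \<circ> b))"
    unfolding comp_set_def by blast
  also have "\<dots> \<longleftrightarrow> (\<exists>a\<in>A. \<exists>b\<in>B. u = h b \<circ> h a)"
    using assms by metis
  also have "\<dots> \<longleftrightarrow> u \<in> comp_set (h ` B) (h ` A)"
    unfolding comp_set_def by blast
  finally show "u \<in> h ` comp_set A B \<longleftrightarrow> u \<in> comp_set (h ` B) (h ` A)" .
qed

lemma comp_set_Union_right: "comp_set A (\<Union>SS) = \<Union> (comp_set A ` SS)"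
  and comp_set_Union_left: "comp_set (\<Union>SS) B = \<Union> ((\<lambda>A. comp_set A B) ` SS)"
  unfolding comp_set_def by blast+

lemma comp_set_id_left: "comp_set {id} A = A"
  and comp_set_id_right: "comp_set A {id} = A"
  unfolding comp_set_def by auto

lemma cjsl_Pow_Union: "cjsl (Pow X) Union"
proof -
  have "\<Union>{x, y} = y \<longleftrightarrow> x \<subseteq> y" for x y :: "'a set"
    by auto
  then show ?thesis
    unfolding cjsl_def o_partial_order_def o_is_lub_def by auto
qed

lemma Union_singletons_eq_iff:
  assumes "S \<subseteq> range (\<lambda>x. {x})" and "U \<subseteq> range (\<lambda>x. {x})"
  shows "\<Union>S = \<Union>U \<longleftrightarrow> S = U"
proof -
  have "S = (\<lambda>x. {x}) ` \<Union>S" and "U = (\<lambda>x. {x}) ` \<Union>U"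
    using assms by blast+
  then show ?thesis
    by metis
qed

lemma Pow_subset_if_Union_closed:
  assumes "(\<lambda>x. {x}) ` X \<subseteq> A" and "\<And>S. S \<subseteq> A \<Longrightarrow> \<Union>S \<in> A"
  shows "Pow X \<subseteq> A"
proof
  fix B assume "B \<in> Pow X"
  then have "(\<lambda>x. {x}) ` B \<subseteq> A"
    using assms(1) by blast
  then have "\<Union> ((\<lambda>x. {x}) ` B) \<in> A"
    by (rule assms(2))
  then show "B \<in> A"
    by simp
qed

locale complete_oml =
  fixes le :: "'a \<Rightarrow> 'a \<Rightarrow> bool" and perp :: "'a \<Rightarrow> 'a"
  assumes col_UNIV: "col UNIV le perp"
begin

definition Join :: "'a set \<Rightarrow> 'a" where "Join = o_lub UNIV le"
definition Meet :: "'a set \<Rightarrow> 'a" where "Meet = o_glb UNIV le"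
definition join :: "'a \<Rightarrow> 'a \<Rightarrow> 'a" where "join x y = Join {x, y}"
definition meet :: "'a \<Rightarrow> 'a \<Rightarrow> 'a" where "meet x y = Meet {x, y}"
definition top_el :: 'a where "top_el = o_top UNIV le"
definition bot_el :: 'a where "bot_el = o_bot UNIV le"
definition less :: "'a \<Rightarrow> 'a \<Rightarrow> bool" where "less x y \<longleftrightarrow> le x y \<and> \<not> le y x"

lemma partial_order_le: "o_partial_order UNIV le"
  and lub_exists: "\<exists>s. o_is_lub UNIV le S s"
  using col_UNIV unfolding col_def o_complete_lattice_def by blast+

lemma refl_le: "le x x"
  and antisym_le: "le x y \<Longrightarrow> le y x \<Longrightarrow> x = y"
  and trans_le: "le x y \<Longrightarrow> le y z \<Longrightarrow> le x z"
  using partial_order_le unfolding o_partial_order_def by blast+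

lemma is_lub_Join: "o_is_lub UNIV le S (Join S)"
proof -
  obtain s where s: "o_is_lub UNIV le S s"
    using lub_exists ..
  moreover have "Join S = s"
    unfolding Join_def using antisym_le s by (rule o_lub_eqI)
  ultimately show ?thesis
    by simp
qed

lemma Join_upper: "x \<in> S \<Longrightarrow> le x (Join S)"
  and Join_least: "(\<And>x. x \<in> S \<Longrightarrow> le x z) \<Longrightarrow> le (Join S) z"
  using is_lub_Join[of S] unfolding o_is_lub_def by blast+

lemma Meet_eq_Join_lower_bounds: "Meet S = Join {u. \<forall>x\<in>S. le u x}"
  unfolding Meet_def
  by (rule o_glb_eqI[OF antisym_le]) (auto simp: o_is_glb_def intro: Join_upper Join_least)

lemma Meet_lower: "x \<in> S \<Longrightarrow> le (Meet S) x"
  and Meet_greatest: "(\<And>x. x \<in> S \<Longrightarrow> le z x) \<Longrightarrow> le z (Meet S)"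
  unfolding Meet_eq_Join_lower_bounds by (auto intro: Join_upper Join_least)

sublocale lat: complete_lattice Meet Join meet le less join bot_el top_el
proof unfold_locales
  show "Meet {} = top_el"
    unfolding top_el_def o_top_def Join_def[symmetric]
    by (rule antisym_le) (auto intro: Meet_greatest Join_upper)
  show "Join {} = bot_el"
    unfolding bot_el_def o_bot_def Join_def ..
qed (unfold join_def meet_def, (fact less_def refl_le antisym_le trans_le
    | rule Meet_greatest Join_least Meet_lower Join_upper; auto)+)

lemma lower_bounds_eqI: "(\<And>z. le z x \<longleftrightarrow> le z y) \<Longrightarrow> x = y"
  by (meson antisym_le refl_le)

lemma upper_bounds_eqI: "(\<And>z. le x z \<longleftrightarrow> le y z) \<Longrightarrow> x = y"
  by (meson antisym_le refl_le)

lemma perp_perp [simp]: "perp (perp x) = x"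
  and perp_antimono: "le x y \<Longrightarrow> le (perp y) (perp x)"
  and join_perp_self [simp]: "join x (perp x) = top_el"
  and meet_perp_self [simp]: "meet x (perp x) = bot_el"
  and orthomodular: "le x y \<Longrightarrow> y = join x (meet y (perp x))"
  using col_UNIV unfolding col_def join_def meet_def Join_def Meet_def top_el_def bot_el_def
  by blast+

lemma le_perp_iff: "le (perp x) (perp y) \<longleftrightarrow> le y x"
  by (metis perp_antimono perp_perp)

lemma le_perp_swap: "le x (perp y) \<longleftrightarrow> le y (perp x)"
  using le_perp_iff[of "perp y" x] by simp

lemma perp_Join: "perp (Join S) = Meet (perp ` S)"
proof (rule lower_bounds_eqI)
  fix z
  have "le z (perp (Join S)) \<longleftrightarrow> le (Join S) (perp z)"
    by (rule le_perp_swap)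
  also have "\<dots> \<longleftrightarrow> (\<forall>x\<in>S. le z (perp x))"
    by (simp add: lat.Sup_le_iff le_perp_swap[of z])
  also have "\<dots> \<longleftrightarrow> le z (Meet (perp ` S))"
    by (simp add: lat.le_Inf_iff)
  finally show "le z (perp (Join S)) \<longleftrightarrow> le z (Meet (perp ` S))" .
qed

lemma perp_Meet: "perp (Meet S) = Join (perp ` S)"
proof -
  have "Meet S = perp (Join (perp ` S))"
    by (simp add: perp_Join image_image)
  then show ?thesis
    by simp
qed

lemma perp_join: "perp (join x y) = meet (perp x) (perp y)"
  using perp_Join[of "{x, y}"] by simp

lemma perp_meet: "perp (meet x y) = join (perp x) (perp y)"
  using perp_Meet[of "{x, y}"] by simp

lemma orthomodular_dual: "le x y \<Longrightarrow> x = meet y (join x (perp y))"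
proof -
  assume "le x y"
  then have "perp x = join (perp y) (meet (perp x) y)"
    using orthomodular[OF perp_antimono] by simp
  then have "x = perp (join (perp y) (meet (perp x) y))"
    by (metis perp_perp)
  then show ?thesis
    by (simp add: perp_join perp_meet)
qed

definition sasaki :: "'a \<Rightarrow> 'a \<Rightarrow> 'a" where
  "sasaki m x = meet m (join (perp m) x)"

lemma sasaki_top [simp]: "sasaki m top_el = m"
  by (simp add: sasaki_def)

lemma sasaki_inj: "sasaki m = sasaki n \<Longrightarrow> m = n"
  by (metis sasaki_top)

lemma join_perp_sasaki: "join (perp m) (sasaki m x) = join (perp m) x"
  using orthomodular[OF lat.sup_ge1, of "perp m" x] by (simp add: sasaki_def lat.inf_commute)

lemma sasaki_le_iff: "le (sasaki m x) y \<longleftrightarrow> le x (join (perp m) (meet m y))"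
proof
  assume "le (sasaki m x) y"
  then have "le (sasaki m x) (meet m y)"
    by (simp add: sasaki_def)
  then have "le (join (perp m) (sasaki m x)) (join (perp m) (meet m y))"
    by (rule lat.sup_mono[OF lat.order_refl])
  then show "le x (join (perp m) (meet m y))"
    by (simp add: join_perp_sasaki)
next
  assume "le x (join (perp m) (meet m y))"
  then have "le (join (perp m) x) (join (perp m) (meet m y))"
    by simp
  then have "le (sasaki m x) (meet m (join (perp m) (meet m y)))"
    unfolding sasaki_def by (rule lat.inf_mono[OF lat.order_refl])
  also have "meet m (join (perp m) (meet m y)) = meet m y"
    using orthomodular_dual[OF lat.inf_le1, of m y] by (simp add: lat.sup_commute)
  also have "le (meet m y) y"
    by simp
  finally show "le (sasaki m x) y" .
qed

lemma sasaki_self_adjoint: "le (sasaki m x) (perp y) \<longleftrightarrow> le x (perp (sasaki m y))"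
  unfolding sasaki_le_iff by (simp add: sasaki_def perp_meet perp_join)

definition join_maps :: "('a \<Rightarrow> 'a) set \<Rightarrow> 'a \<Rightarrow> 'a" where
  "join_maps S x = Join ((\<lambda>f. f x) ` S)"

definition adjoint :: "('a \<Rightarrow> 'a) \<Rightarrow> ('a \<Rightarrow> 'a) \<Rightarrow> bool" where
  "adjoint f g \<longleftrightarrow> (\<forall>x y. le (f x) (perp y) \<longleftrightarrow> le x (perp (g y)))"

abbreviation lin_maps :: "('a \<Rightarrow> 'a) set" where
  "lin_maps \<equiv> lin_car UNIV le perp"

abbreviation adj_of :: "('a \<Rightarrow> 'a) \<Rightarrow> 'a \<Rightarrow> 'a" where
  "adj_of \<equiv> lin_adj UNIV le perp"

lemma is_adjoint_UNIV: "is_adjoint UNIV le perp = adjoint"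
  by (simp add: fun_eq_iff is_adjoint_def adjoint_def)

lemma lin_maps_iff: "f \<in> lin_maps \<longleftrightarrow> (\<exists>g. adjoint f g)"
  by (simp add: lin_car_def ext_map_def is_adjoint_UNIV)

lemma adjoint_unique:
  assumes g: "adjoint f g" and h: "adjoint f h"
  shows "g = h"
proof (rule ext)
  fix y
  have "le x (perp (g y)) \<longleftrightarrow> le x (perp (h y))" for x
  proof -
    have "le x (perp (g y)) \<longleftrightarrow> le (f x) (perp y)"
      using g unfolding adjoint_def by blast
    also have "\<dots> \<longleftrightarrow> le x (perp (h y))"
      using h unfolding adjoint_def by blast
    finally show ?thesis .
  qed
  then have "perp (g y) = perp (h y)"
    by (rule lower_bounds_eqI)
  then show "g y = h y"
    by (metis perp_perp)
qed

lemma adjoint_sym: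
  assumes "adjoint f g"
  shows "adjoint g f"
  unfolding adjoint_def
proof (intro allI)
  fix x y
  have "le (g x) (perp y) \<longleftrightarrow> le y (perp (g x))"
    by (rule le_perp_swap)
  also have "\<dots> \<longleftrightarrow> le (f y) (perp x)"
    using assms unfolding adjoint_def by blast
  also have "\<dots> \<longleftrightarrow> le x (perp (f y))"
    by (rule le_perp_swap)
  finally show "le (g x) (perp y) \<longleftrightarrow> le x (perp (f y))" .
qed

lemma adj_of_eqI: "adjoint f g \<Longrightarrow> adj_of f = g"
  unfolding lin_adj_def is_adjoint_UNIV
  by (rule the_equality) (auto simp: ext_map_def intro: adjoint_unique)

lemma adjoint_adj_of: "f \<in> lin_maps \<Longrightarrow> adjoint f (adj_of f)"
  using lin_maps_iff adj_of_eqI by blast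

lemma adj_of_in_lin_maps: "f \<in> lin_maps \<Longrightarrow> adj_of f \<in> lin_maps"
  using lin_maps_iff adjoint_adj_of adjoint_sym by blast

lemma adj_of_adj_of: "f \<in> lin_maps \<Longrightarrow> adj_of (adj_of f) = f"
  using adjoint_adj_of adjoint_sym adj_of_eqI by blast

lemma adjoint_le_iff: "adjoint f g \<Longrightarrow> le (f x) z \<longleftrightarrow> le x (perp (g (perp z)))"
  unfolding adjoint_def by (drule spec[of _ x], drule spec[of _ "perp z"]) simp

lemma adjoint_Join: "adjoint f g \<Longrightarrow> f (Join S) = Join (f ` S)"
  by (rule upper_bounds_eqI) (simp add: adjoint_le_iff[of f g] lat.Sup_le_iff)

lemma adjoint_comp: "adjoint f g \<Longrightarrow> adjoint f' g' \<Longrightarrow> adjoint (f \<circ> f') (g' \<circ> g)"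
  unfolding adjoint_def by simp

lemma adjoint_id: "adjoint id id"
  unfolding adjoint_def by (simp add: le_perp_swap)

lemma adjoint_sasaki: "adjoint (sasaki m) (sasaki m)"
  unfolding adjoint_def using sasaki_self_adjoint by blast

lemma adjoint_join_maps:
  assumes "\<And>f. f \<in> S \<Longrightarrow> adjoint f (G f)"
  shows "adjoint (join_maps S) (join_maps (G ` S))"
  unfolding adjoint_def
proof (intro allI)
  fix x y
  have "le (join_maps S x) (perp y) \<longleftrightarrow> (\<forall>f\<in>S. le (f x) (perp y))"
    by (simp add: join_maps_def lat.Sup_le_iff)
  also have "\<dots> \<longleftrightarrow> (\<forall>f\<in>S. le x (perp (G f y)))"
    using assms unfolding adjoint_def by blast
  also have "\<dots> \<longleftrightarrow> le x (perp (join_maps (G ` S) y))"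
    by (simp add: join_maps_def perp_Join lat.le_Inf_iff image_image)
  finally show "le (join_maps S x) (perp y) \<longleftrightarrow> le x (perp (join_maps (G ` S) y))" .
qed

definition neg_map :: "('a \<Rightarrow> 'a) \<Rightarrow> 'a \<Rightarrow> 'a" where
  "neg_map f = sasaki (perp (f top_el))"

lemma proj_UNIV: "proj UNIV le perp = sasaki"
  by (simp add: fun_eq_iff proj_def sasaki_def join_def meet_def Join_def Meet_def)

lemma Lin_simps:
  "ida_car (Lin UNIV le perp) = lin_maps"
  "ida_join (Lin UNIV le perp) = join_maps"
  "ida_mult (Lin UNIV le perp) = (\<circ>)"
  "ida_star (Lin UNIV le perp) = adj_of"
  "ida_unit (Lin UNIV le perp) = id"
  "ida_neg (Lin UNIV le perp) = neg_map"
  by (simp_all add: Lin_def proj_UNIV fun_eq_iff join_maps_def neg_map_def Join_def top_el_def)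

lemma join_maps_in_lin_maps: "S \<subseteq> lin_maps \<Longrightarrow> join_maps S \<in> lin_maps"
  unfolding lin_maps_iff using adjoint_join_maps adjoint_adj_of by blast

lemma join_maps_pair_eq_iff: "join_maps {f, g} = g \<longleftrightarrow> (\<forall>x. le (f x) (g x))"
  by (simp add: join_maps_def fun_eq_iff lat.le_iff_sup)

lemma cjsl_lin_maps: "cjsl lin_maps join_maps"
  unfolding cjsl_def o_partial_order_def o_is_lub_def join_maps_pair_eq_iff
  using join_maps_in_lin_maps
  by (auto simp: join_maps_def fun_eq_iff intro: refl_le antisym_le trans_le Join_upper Join_least)

lemma comp_join_maps:
  assumes "f \<in> lin_maps"
  shows "f \<circ> join_maps S = join_maps ((\<circ>) f ` S)"
  using adjoint_Join[OF adjoint_adj_of[OF assms]] by (simp add: join_maps_def fun_eq_iff image_image)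

lemma comp_in_lin_maps: "f \<in> lin_maps \<Longrightarrow> g \<in> lin_maps \<Longrightarrow> f \<circ> g \<in> lin_maps"
  unfolding lin_maps_iff using adjoint_comp by blast

lemma adj_of_comp: "f \<in> lin_maps \<Longrightarrow> g \<in> lin_maps \<Longrightarrow> adj_of (f \<circ> g) = adj_of g \<circ> adj_of f"
  by (intro adj_of_eqI adjoint_comp adjoint_adj_of)

lemma adj_of_join_maps: "S \<subseteq> lin_maps \<Longrightarrow> adj_of (join_maps S) = join_maps (adj_of ` S)"
  by (intro adj_of_eqI adjoint_join_maps adjoint_adj_of) blast

lemma adj_of_sasaki [simp]: "adj_of (sasaki m) = sasaki m"
  by (rule adj_of_eqI, rule adjoint_sasaki)

lemma sasaki_in_lin_maps: "sasaki m \<in> lin_maps"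
  using lin_maps_iff adjoint_sasaki by blast

lemma ida_Lin: "ida (Lin UNIV le perp)"
  unfolding ida_def Let_def Lin_simps
proof (intro conjI ballI allI impI)
  show "cjsl lin_maps join_maps"
    by (rule cjsl_lin_maps)
  show "id \<in> lin_maps"
    using lin_maps_iff adjoint_id by blast
next
  fix f g assume "f \<in> lin_maps" "g \<in> lin_maps"
  then show "f \<circ> g \<in> lin_maps" "adj_of (f \<circ> g) = adj_of g \<circ> adj_of f"
    by (simp_all add: comp_in_lin_maps adj_of_comp)
next
  fix f S assume "f \<in> lin_maps" "S \<subseteq> lin_maps"
  then show "f \<circ> join_maps S = join_maps ((\<circ>) f ` S)" "join_maps S \<circ> f = join_maps ((\<lambda>g. g \<circ> f) ` S)"
    by (simp_all add: comp_join_maps) (simp add: join_maps_def fun_eq_iff image_image)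
next
  fix f assume "f \<in> lin_maps"
  then show "adj_of f \<in> lin_maps" "adj_of (adj_of f) = f"
    by (simp_all add: adj_of_in_lin_maps adj_of_adj_of)
next
  fix S assume "S \<subseteq> lin_maps"
  then show "adj_of (join_maps S) = join_maps (adj_of ` S)"
    by (rule adj_of_join_maps)
next
  fix f g S
  show "neg_map f \<in> lin_maps"
    unfolding neg_map_def by (rule sasaki_in_lin_maps)
  show "neg_map (f \<circ> neg_map (neg_map g)) = neg_map (f \<circ> g)"
    by (simp add: neg_map_def)
  show "neg_map (join_maps ((\<lambda>f. neg_map (neg_map f)) ` S)) = neg_map (join_maps S)"
    by (simp add: neg_map_def join_maps_def image_image)
  show "adj_of (neg_map f) = neg_map f"
    by (simp add: neg_map_def)
  show "neg_map (neg_map (neg_map (neg_map f) \<circ> g)) = neg_map (join_maps {neg_map f, neg_map (join_maps {neg_map f, g})})"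
    by (simp add: neg_map_def join_maps_def sasaki_def perp_join perp_meet)
qed (simp_all add: comp_assoc)

definition join_top :: "('a \<Rightarrow> 'a) set \<Rightarrow> 'a" where
  "join_top A = Join ((\<lambda>a. a top_el) ` A)"

definition neg_set :: "('a \<Rightarrow> 'a) set \<Rightarrow> ('a \<Rightarrow> 'a) set" where
  "neg_set A = {sasaki (perp (join_top A))}"

lemma Pw_simps:
  "ida_car (Pw UNIV le perp L) = Pow L"
  "ida_join (Pw UNIV le perp L) = Union"
  "ida_mult (Pw UNIV le perp L) = comp_set"
  "ida_star (Pw UNIV le perp L) = image adj_of"
  "ida_unit (Pw UNIV le perp L) = {id}"
  "ida_neg (Pw UNIV le perp L) = neg_set"
  by (simp_all add: Pw_def proj_UNIV fun_eq_iff comp_set_def neg_set_def join_top_def Join_def top_el_def)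

lemma join_top_singleton [simp]: "join_top {f} = f top_el"
  by (simp add: join_top_def)

lemma neg_set_neg_set: "neg_set (neg_set A) = {sasaki (join_top A)}"
  by (simp add: neg_set_def)

lemma join_top_union: "join_top (A \<union> B) = join (join_top A) (join_top B)"
  by (simp add: join_top_def image_Un lat.Sup_union_distrib)

lemma join_top_neg_set [simp]: "join_top (neg_set A) = perp (join_top A)"
  by (simp add: neg_set_def)

lemma join_top_Union: "join_top (\<Union>SS) = Join (join_top ` SS)"
  by (rule upper_bounds_eqI) (auto simp: join_top_def lat.Sup_le_iff)

lemma join_top_comp_set:
  assumes "A \<subseteq> lin_maps"
  shows "join_top (comp_set A B) = Join ((\<lambda>a. a (join_top B)) ` A)"
proof (rule upper_bounds_eqI)
  fix z
  have "le (a (join_top B)) z \<longleftrightarrow> (\<forall>b\<in>B. le (a (b top_el)) z)" if "a \<in> A" for a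
  proof -
    have "a (join_top B) = Join (a ` (\<lambda>b. b top_el) ` B)"
      unfolding join_top_def using that assms by (blast intro: adjoint_Join adjoint_adj_of)
    then show ?thesis
      by (simp add: lat.Sup_le_iff)
  qed
  then show "le (join_top (comp_set A B)) z \<longleftrightarrow> le (Join ((\<lambda>a. a (join_top B)) ` A)) z"
    by (auto simp: join_top_def comp_set_def lat.Sup_le_iff) (metis comp_apply)
qed

lemma neg_set_sasaki_law:
  "neg_set (neg_set (comp_set (neg_set (neg_set A)) B)) = neg_set (\<Union> {neg_set A, neg_set (\<Union> {neg_set A, B})})"
proof -
  have "neg_set (neg_set (comp_set (neg_set (neg_set A)) B)) = {sasaki (sasaki (join_top A) (join_top B))}"
    using join_top_comp_set[of "{sasaki (join_top A)}" B] sasaki_in_lin_maps by (simp add: neg_set_neg_set)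
  moreover have "join_top (\<Union> {neg_set A, neg_set (\<Union> {neg_set A, B})}) = perp (sasaki (join_top A) (join_top B))"
    by (simp add: join_top_union sasaki_def perp_meet)
  ultimately show ?thesis
    using neg_set_def[of "\<Union> {neg_set A, neg_set (\<Union> {neg_set A, B})}"] by simp
qed

lemma o_is_lub_range_image:
  assumes "\<And>x y. le' (h x) (h y) \<longleftrightarrow> le x y"
  shows "o_is_lub (range h) le' (h ` S) (h (Join S))"
  using assms by (auto simp: o_is_lub_def intro: Join_upper Join_least)

lemma o_is_glb_range_image:
  assumes "\<And>x y. le' (h x) (h y) \<longleftrightarrow> le x y"
  shows "o_is_glb (range h) le' (h ` S) (h (Meet S))"
  using assms by (auto simp: o_is_glb_def intro: Meet_lower Meet_greatest)

lemma antisym_range: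
  assumes "\<And>x y. le' (h x) (h y) \<longleftrightarrow> le x y"
    and "x \<in> range h" "y \<in> range h" "le' x y" "le' y x"
  shows "x = y"
  using assms by (auto intro: arg_cong[where f = h] antisym_le)

lemma o_lub_range_image:
  assumes "\<And>x y. le' (h x) (h y) \<longleftrightarrow> le x y"
  shows "o_lub (range h) le' (h ` S) = h (Join S)"
  using antisym_range[of le' h, OF assms] o_is_lub_range_image[of le' h, OF assms] by (rule o_lub_eqI)

lemma o_glb_range_image:
  assumes "\<And>x y. le' (h x) (h y) \<longleftrightarrow> le x y"
  shows "o_glb (range h) le' (h ` S) = h (Meet S)"
  using antisym_range[of le' h, OF assms] o_is_glb_range_image[of le' h, OF assms] by (rule o_glb_eqI)

lemma o_complete_lattice_range:
  assumes le'_h: "\<And>x y. le' (h x) (h y) \<longleftrightarrow> le x y"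
  shows "o_complete_lattice (range h) le'"
  unfolding o_complete_lattice_def o_partial_order_def
proof (intro conjI ballI allI impI)
  fix T assume "T \<subseteq> range h"
  then have "T = h ` (h -` T)"
    by blast
  then show "\<exists>s. o_is_lub (range h) le' T s"
    using o_is_lub_range_image[of le' h, OF le'_h] by metis
next
  fix x assume "x \<in> range h"
  then show "le' x x"
    using le'_h refl_le by auto
next
  fix x y assume "x \<in> range h" "y \<in> range h" "le' x y \<and> le' y x"
  then show "x = y"
    using antisym_range[of le' h, OF le'_h] by blast
next
  fix x y z assume "x \<in> range h" "y \<in> range h" "z \<in> range h" "le' x y \<and> le' y z"
  then show "le' x z"
    using le'_h trans_le by (metis rangeE)
qed

lemma col_range:
  fixes h :: "'a \<Rightarrow> 'b"
  assumes le'_h: "\<And>x y. le' (h x) (h y) \<longleftrightarrow> le x y"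
    and perp'_h: "\<And>x. perp' (h x) = h (perp x)"
  shows "col (range h) le' perp'"
proof -
  note lub = o_lub_range_image[of le' h, OF le'_h] and glb = o_glb_range_image[of le' h, OF le'_h]
  have lub2: "o_lub (range h) le' {h x, h y} = h (join x y)"
    and glb2: "o_glb (range h) le' {h x, h y} = h (meet x y)" for x y
    using lub[of "{x, y}"] glb[of "{x, y}"] by simp_all
  have top: "o_top (range h) le' = h top_el" and bot: "o_bot (range h) le' = h bot_el"
    using lub[of UNIV] lub[of "{}"] by (simp_all add: o_top_def o_bot_def)
  show ?thesis
    unfolding col_def
  proof (intro conjI ballI impI)
    show "o_complete_lattice (range h) le'"
      using le'_h by (rule o_complete_lattice_range)
  next
    fix x assume "x \<in> range h"
    then obtain a where "x = h a" ..
    then show "perp' x \<in> range h" "perp' (perp' x) = x"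
      "o_lub (range h) le' {x, perp' x} = o_top (range h) le'"
      "o_glb (range h) le' {x, perp' x} = o_bot (range h) le'"
      by (simp_all add: perp'_h lub2 glb2 top bot)
  next
    fix x y assume "x \<in> range h" "y \<in> range h" "le' x y"
    then obtain a b where "x = h a" "y = h b" "le a b"
      using le'_h by blast
    then show "le' (perp' y) (perp' x)"
      and "y = o_lub (range h) le' {x, o_glb (range h) le' {y, perp' x}}"
      using orthomodular by (simp_all add: perp'_h le'_h glb2 lub2 perp_antimono)
  qed
qed

end

locale oml_lin_submonoid = complete_oml +
  fixes L :: "('a \<Rightarrow> 'a) set"
  assumes inv_submonoid_L: "inv_submonoid (Lin UNIV le perp) L"
    and tests_subset_L: "tests (Lin UNIV le perp) \<subseteq> L"
begin

abbreviation PwL :: "('a \<Rightarrow> 'a) set ida" where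
  "PwL \<equiv> Pw UNIV le perp L"

lemma L_subset_lin_maps: "L \<subseteq> lin_maps"
  and id_in_L: "id \<in> L"
  and comp_in_L: "a \<in> L \<Longrightarrow> b \<in> L \<Longrightarrow> a \<circ> b \<in> L"
  and adj_of_in_L: "a \<in> L \<Longrightarrow> adj_of a \<in> L"
  using inv_submonoid_L unfolding inv_submonoid_def Lin_simps by blast+

lemma sasaki_in_L: "sasaki m \<in> L"
proof -
  have "sasaki m = neg_map (sasaki (perp m))"
    by (simp add: neg_map_def)
  then show ?thesis
    using tests_subset_L sasaki_in_lin_maps unfolding tests_def Lin_simps by blast
qed

lemma ida_PwL: "ida PwL"
  unfolding ida_def Let_def Pw_simps
proof (intro conjI ballI allI impI)
  show "cjsl (Pow L) Union"
    by (rule cjsl_Pow_Union)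
  show "{id} \<in> Pow L"
    using id_in_L by simp
next
  fix A B assume A: "A \<in> Pow L" and B: "B \<in> Pow L"
  then show "comp_set A B \<in> Pow L"
    unfolding comp_set_def using comp_in_L by blast
  show "adj_of ` comp_set A B = comp_set (adj_of ` B) (adj_of ` A)"
    using A B L_subset_lin_maps by (intro image_comp_set_rev adj_of_comp) blast+
  have "A \<subseteq> lin_maps"
    using A L_subset_lin_maps by blast
  then show "neg_set (comp_set A (neg_set (neg_set B))) = neg_set (comp_set A B)"
    by (simp add: neg_set_neg_set neg_set_def join_top_comp_set)
next
  fix A assume A: "A \<in> Pow L"
  then show "adj_of ` A \<in> Pow L"
    using adj_of_in_L by blast
  show "adj_of ` adj_of ` A = A"
    using A L_subset_lin_maps by (force simp: image_image adj_of_adj_of)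
next
  fix A B C :: "('a \<Rightarrow> 'a) set" and SS :: "('a \<Rightarrow> 'a) set set"
  show "comp_set (comp_set A B) C = comp_set A (comp_set B C)"
    by (rule comp_set_assoc)
  show "comp_set A (\<Union>SS) = \<Union> (comp_set A ` SS)" "comp_set (\<Union>SS) A = \<Union> ((\<lambda>B. comp_set B A) ` SS)"
    by (rule comp_set_Union_right comp_set_Union_left)+
  show "comp_set {id} A = A" "comp_set A {id} = A"
    by (rule comp_set_id_left comp_set_id_right)+
  show "adj_of ` \<Union>SS = \<Union> (image adj_of ` SS)"
    by blast
  show "neg_set A \<in> Pow L"
    unfolding neg_set_def using sasaki_in_L by simp
  show "neg_set (\<Union> ((\<lambda>A. neg_set (neg_set A)) ` SS)) = neg_set (\<Union>SS)"
    by (simp add: neg_set_neg_set neg_set_def join_top_Union image_image)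
  show "adj_of ` neg_set A = neg_set A"
    by (simp add: neg_set_def)
  show "neg_set (neg_set (comp_set (neg_set (neg_set A)) B)) = neg_set (\<Union> {neg_set A, neg_set (\<Union> {neg_set A, B})})"
    by (rule neg_set_sasaki_law)
qed

lemma tests_PwL: "tests PwL = range (\<lambda>m. {sasaki m})"
proof -
  have "{sasaki m} \<in> neg_set ` Pow L" for m
    using sasaki_in_L by (intro image_eqI[of _ _ "{sasaki (perp m)}"]) (simp_all add: neg_set_def)
  then have "range (\<lambda>m. {sasaki m}) \<subseteq> neg_set ` Pow L"
    by blast
  moreover have "neg_set ` Pow L \<subseteq> range (\<lambda>m. {sasaki m})"
    unfolding neg_set_def by blast
  ultimately show ?thesis
    unfolding tests_def Pw_simps by blast
qed

lemma tle_PwL_sasaki: "tle PwL {sasaki m} {sasaki n} \<longleftrightarrow> le m n"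
proof -
  have "tle PwL {sasaki m} {sasaki n} \<longleftrightarrow> sasaki (join n m) = sasaki n"
    unfolding tle_def tvee_def Pw_simps neg_set_neg_set by (simp add: join_top_def)
  also have "\<dots> \<longleftrightarrow> join n m = n"
    by (auto dest: sasaki_inj)
  also have "\<dots> \<longleftrightarrow> le m n"
    by (simp add: lat.le_iff_sup lat.sup_commute)
  finally show ?thesis .
qed

lemma col_tests_PwL: "col (tests PwL) (tle PwL) (ida_neg PwL)"
  unfolding tests_PwL
  by (rule col_range) (simp_all add: tle_PwL_sasaki Pw_simps neg_set_def)

lemma bullet_PwL_singleton: "bullet PwL {f} {sasaki m} = {sasaki (f m)}"
  by (simp add: bullet_def Pw_simps neg_set_neg_set comp_set_def)

lemma tequiv_PwL_singleton_iff: "tequiv PwL {f} {g} \<longleftrightarrow> f = g"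
proof
  assume "tequiv PwL {f} {g}"
  then have "{sasaki (f m)} = {sasaki (g m)}" for m
    unfolding tequiv_def tests_PwL by (simp add: bullet_PwL_singleton)
  then show "f = g"
    by (auto dest: sasaki_inj)
qed (simp add: tequiv_def)

lemma toda_PwL:
  assumes TP: "TP PwL = (\<lambda>f. {f}) ` L"
  shows "toda TP PwL"
  unfolding toda_def
proof (intro conjI allI impI ballI)
  show "ida PwL"
    by (rule ida_PwL)
  show "col (tests PwL) (tle PwL) (ida_neg PwL)"
    by (rule col_tests_PwL)
next
  fix A assume A: "TP PwL \<subseteq> A \<and> A \<subseteq> ida_car PwL \<and> ida_closed PwL A"
  then have "Pow L \<subseteq> A"
    using TP unfolding ida_closed_def Pw_simps by (intro Pow_subset_if_Union_closed) auto
  with A show "A = ida_car PwL"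
    unfolding Pw_simps by blast
next
  fix S U assume "S \<subseteq> TP PwL \<and> U \<subseteq> TP PwL"
  then show "ida_join PwL S = ida_join PwL U \<longleftrightarrow> S = U"
    unfolding Pw_simps TP by (intro Union_singletons_eq_iff) blast+
next
  fix s t assume "s \<in> TP PwL" "t \<in> TP PwL"
  then show "s = t \<longleftrightarrow> tequiv PwL s t"
    unfolding TP using tequiv_PwL_singleton_iff by auto
qed

end


lemma col_iso_inv: "col_iso le perp le' perp' k \<Longrightarrow> col_iso le' perp' le perp (inv k)"
  unfolding col_iso_def by (metis bij_imp_bij_inv bij_inv_eq_iff)

locale complete_oml_iso = src: complete_oml le perp + tgt: complete_oml le' perp'
  for le :: "'a \<Rightarrow> 'a \<Rightarrow> bool" and perp and le' :: "'b \<Rightarrow> 'b \<Rightarrow> bool" and perp' +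
  fixes k :: "'a \<Rightarrow> 'b"
  assumes col_iso_k: "col_iso le perp le' perp' k"
begin

lemma bij_k: "bij k"
  and le'_k_iff: "le' (k x) (k y) \<longleftrightarrow> le x y"
  and k_perp: "k (perp x) = perp' (k x)"
  using col_iso_k unfolding col_iso_def by blast+

lemma k_inv_k [simp]: "k (inv k y) = y"
  and inv_k_k [simp]: "inv k (k x) = x"
  using bij_k by (simp_all add: bij_is_surj surj_f_inv_f bij_is_inj)

lemma le'_k_left_iff: "le' (k x) y \<longleftrightarrow> le x (inv k y)"
  using le'_k_iff[of x "inv k y"] by simp

lemma k_Join: "k (src.Join S) = tgt.Join (k ` S)"
  by (rule tgt.upper_bounds_eqI)
    (simp add: le'_k_left_iff src.lat.Sup_le_iff tgt.lat.Sup_le_iff)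

lemma k_join: "k (src.join x y) = tgt.join (k x) (k y)"
  using k_Join[of "{x, y}"] by simp

lemma k_meet: "k (src.meet x y) = tgt.meet (k x) (k y)"
proof -
  have "src.meet x y = perp (src.join (perp x) (perp y))"
    by (simp add: src.perp_join)
  then show ?thesis
    by (simp add: k_perp k_join tgt.perp_join)
qed

lemma k_top: "k src.top_el = tgt.top_el"
  using k_Join[of UNIV] bij_k by (simp add: bij_is_surj)

lemma inv_k_top: "inv k tgt.top_el = src.top_el"
  by (metis inv_k_k k_top)

lemma k_sasaki: "k (src.sasaki m x) = tgt.sasaki (k m) (k x)"
  by (simp add: src.sasaki_def tgt.sasaki_def k_meet k_join k_perp)

definition conjugate :: "('a \<Rightarrow> 'a) \<Rightarrow> 'b \<Rightarrow> 'b" where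
  "conjugate f = k \<circ> f \<circ> inv k"

lemma gamma_map_eq: "gamma_map k = image conjugate"
  by (simp add: fun_eq_iff gamma_map_def conjugate_def)

lemma conjugate_comp: "conjugate (f \<circ> g) = conjugate f \<circ> conjugate g"
  by (simp add: conjugate_def fun_eq_iff)

lemma conjugate_id: "conjugate id = id"
  by (simp add: conjugate_def fun_eq_iff)

lemma conjugate_sasaki: "conjugate (src.sasaki m) = tgt.sasaki (k m)"
  by (simp add: conjugate_def fun_eq_iff k_sasaki)

lemma conjugate_adjoint: "src.adjoint f g \<Longrightarrow> tgt.adjoint (conjugate f) (conjugate g)"
  unfolding src.adjoint_def tgt.adjoint_def conjugate_def
  by (metis comp_apply k_inv_k k_perp le'_k_iff)

lemma conjugate_in_lin_maps: "f \<in> src.lin_maps \<Longrightarrow> conjugate f \<in> tgt.lin_maps"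
  unfolding src.lin_maps_iff tgt.lin_maps_iff using conjugate_adjoint by blast

lemma conjugate_adj_of: "f \<in> src.lin_maps \<Longrightarrow> conjugate (src.adj_of f) = tgt.adj_of (conjugate f)"
  by (intro tgt.adj_of_eqI[symmetric] conjugate_adjoint src.adjoint_adj_of)

lemma conjugate_join_maps: "conjugate (src.join_maps S) = tgt.join_maps (conjugate ` S)"
  by (simp add: conjugate_def src.join_maps_def tgt.join_maps_def fun_eq_iff k_Join image_image)

lemma conjugate_neg_map: "conjugate (src.neg_map f) = tgt.neg_map (conjugate f)"
proof -
  have "conjugate f tgt.top_el = k (f src.top_el)"
    by (simp add: conjugate_def inv_k_top)
  then show ?thesis
    by (simp add: src.neg_map_def tgt.neg_map_def conjugate_sasaki k_perp)
qed

lemma ida_hom_conjugate_Lin: "ida_hom (Lin UNIV le perp) (Lin UNIV le' perp') conjugate"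
  unfolding ida_hom_def src.Lin_simps tgt.Lin_simps
  using conjugate_in_lin_maps conjugate_join_maps conjugate_comp conjugate_adj_of conjugate_id conjugate_neg_map by blast

lemma join_top_image_conjugate: "tgt.join_top (conjugate ` A) = k (src.join_top A)"
  by (simp add: src.join_top_def tgt.join_top_def conjugate_def image_image k_Join inv_k_top)

lemma ida_hom_image_conjugate_Pw:
  assumes "La \<subseteq> src.lin_maps" and "conjugate ` La \<subseteq> Lb"
  shows "ida_hom (Pw UNIV le perp La) (Pw UNIV le' perp' Lb) (image conjugate)"
  unfolding ida_hom_def src.Pw_simps tgt.Pw_simps
proof (intro conjI ballI allI impI)
  show "image conjugate ` Pow La \<subseteq> Pow Lb"
    using assms(2) by blast
  show "conjugate ` {id} = {id}"
    by (simp add: conjugate_id)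
next
  fix A B assume "A \<in> Pow La" "B \<in> Pow La"
  show "conjugate ` comp_set A B = comp_set (conjugate ` A) (conjugate ` B)"
    by (rule image_comp_set) (rule conjugate_comp)
next
  fix A assume "A \<in> Pow La"
  then have "conjugate (src.adj_of f) = tgt.adj_of (conjugate f)" if "f \<in> A" for f
    using that assms(1) conjugate_adj_of by blast
  then show "conjugate ` src.adj_of ` A = tgt.adj_of ` conjugate ` A"
    unfolding image_image by (rule image_cong[OF refl])
next
  fix SS :: "('a \<Rightarrow> 'a) set set" and A
  show "conjugate ` \<Union>SS = \<Union> (image conjugate ` SS)"
    by blast
  show "conjugate ` src.neg_set A = tgt.neg_set (conjugate ` A)"
    by (simp add: src.neg_set_def tgt.neg_set_def conjugate_sasaki k_perp join_top_image_conjugate)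
qed

end

lemma Gamma_toda:
  assumes "T_ax1 TL" and "T_ax3 TL TP" and "col UNIV le perp"
  shows "toda TP (Gamma TL le perp)"
proof -
  interpret complete_oml le perp
    by (rule complete_oml.intro) (fact assms(3))
  interpret oml_lin_submonoid le perp "TL (Lin UNIV le perp)"
    using assms(1) ida_Lin unfolding T_ax1_def by unfold_locales blast+
  have "bij_betw (\<lambda>f. {f}) (TL (Lin UNIV le perp)) (TP PwL)"
    using assms(2,3) unfolding T_ax3_def im_iso_def by blast
  then show ?thesis
    unfolding Gamma_def by (intro toda_PwL) (simp add: bij_betw_def)
qed

lemma gamma_map_toda_morph:
  assumes "T_ax1 TLa" and "T_ax4 TLa TLb" and "T_ax4 TLb TLa"
    and "col UNIV le perp" and "col UNIV le' perp'" and "col_iso le perp le' perp' k"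
  shows "toda_morph (Gamma TLa le perp) (Gamma TLb le' perp') (gamma_map k)"
proof -
  interpret fwd: complete_oml_iso le perp le' perp' k
    using assms(4-6) by (intro complete_oml_iso.intro complete_oml_iso_axioms.intro complete_oml.intro)
  interpret bwd: complete_oml_iso le' perp' le perp "inv k"
    using assms(4-6) col_iso_inv by (intro complete_oml_iso.intro complete_oml_iso_axioms.intro complete_oml.intro)
  let ?La = "TLa (Lin UNIV le perp)" and ?Lb = "TLb (Lin UNIV le' perp')"
  have "inv_submonoid (Lin UNIV le perp) ?La"
    using assms(1) fwd.src.ida_Lin unfolding T_ax1_def by blast
  then have La: "?La \<subseteq> fwd.src.lin_maps"
    unfolding inv_submonoid_def fwd.src.Lin_simps by blast
  have fwd_maps: "fwd.conjugate ` ?La \<subseteq> ?Lb"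
    using assms(2) fwd.src.ida_Lin fwd.tgt.ida_Lin fwd.ida_hom_conjugate_Lin unfolding T_ax4_def by blast
  have bwd_maps: "bwd.conjugate ` ?Lb \<subseteq> ?La"
    using assms(3) fwd.src.ida_Lin fwd.tgt.ida_Lin bwd.ida_hom_conjugate_Lin unfolding T_ax4_def by blast
  have "bwd.conjugate (fwd.conjugate f) = f" and "fwd.conjugate (bwd.conjugate g) = g" for f g
    using fwd.bij_k by (simp_all add: fwd.conjugate_def bwd.conjugate_def inv_inv_eq fun_eq_iff)
  then have "bij_betw fwd.conjugate ?La ?Lb"
    using fwd_maps bwd_maps by (intro bij_betw_byWitness[where f' = bwd.conjugate]) auto
  then have "bij_betw (image fwd.conjugate) (Pow ?La) (Pow ?Lb)"
    by (rule bij_betw_image_Pow)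
  moreover have "ida_hom (Pw UNIV le perp ?La) (Pw UNIV le' perp' ?Lb) (image fwd.conjugate)"
    using La fwd_maps by (rule fwd.ida_hom_image_conjugate_Pw)
  ultimately show ?thesis
    unfolding toda_morph_def Gamma_def fwd.gamma_map_eq fwd.src.Pw_simps fwd.tgt.Pw_simps by blast
qed

lemma gamma_map_id: "gamma_map id A = A"
  by (simp add: gamma_map_def)

lemma gamma_map_comp: "bij k \<Longrightarrow> bij l \<Longrightarrow> gamma_map (l \<circ> k) A = gamma_map l (gamma_map k A)"
  by (simp add: gamma_map_def image_image o_inv_distrib comp_assoc)

theorem theorem5p5:
  fixes TKa :: "'a ida \<Rightarrow> 'a set"
    and TLa :: "('a \<Rightarrow> 'a) ida \<Rightarrow> ('a \<Rightarrow> 'a) set"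
    and TPa :: "('a \<Rightarrow> 'a) set ida \<Rightarrow> ('a \<Rightarrow> 'a) set set"
    and TKb :: "'b ida \<Rightarrow> 'b set"
    and TLb :: "('b \<Rightarrow> 'b) ida \<Rightarrow> ('b \<Rightarrow> 'b) set"
    and TPb :: "('b \<Rightarrow> 'b) set ida \<Rightarrow> ('b \<Rightarrow> 'b) set set"
  assumes "T_ax1 TKa" "T_ax1 TLa" "T_ax1 TPa" "T_ax1 TKb" "T_ax1 TLb" "T_ax1 TPb"
    and "T_ax2 TKa TLa" "T_ax2 TKb TLb"
    and "T_ax3 TLa TPa" "T_ax3 TLb TPb"
    and "T_ax4 TKa TKa" "T_ax4 TKa TKb" "T_ax4 TKb TKa" "T_ax4 TKb TKb"
    and "T_ax4 TLa TLa" "T_ax4 TLa TLb" "T_ax4 TLb TLa" "T_ax4 TLb TLb"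
    and "T_ax4 TPa TPa" "T_ax4 TPa TPb" "T_ax4 TPb TPa" "T_ax4 TPb TPb"
  shows
    "(\<forall>le perp. col (UNIV :: 'a set) le perp \<longrightarrow> toda TPa (Gamma TLa le perp)) \<and>
     (\<forall>le perp le' perp' (k :: 'a \<Rightarrow> 'b).
        col UNIV le perp \<and> col UNIV le' perp' \<and> col_iso le perp le' perp' k \<longrightarrow>
        toda_morph (Gamma TLa le perp) (Gamma TLb le' perp') (gamma_map k)) \<and>
     (\<forall>le perp. col (UNIV :: 'a set) le perp \<longrightarrow>
        (\<forall>A\<in>ida_car (Gamma TLa le perp). gamma_map id A = A)) \<and>
     (\<forall>le perp le' perp' (le'' :: 'c \<Rightarrow> 'c \<Rightarrow> bool) perp'' (k :: 'a \<Rightarrow> 'b) (l :: 'b \<Rightarrow> 'c).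
        col UNIV le perp \<and> col UNIV le' perp' \<and> col UNIV le'' perp'' \<and>
        col_iso le perp le' perp' k \<and> col_iso le' perp' le'' perp'' l \<longrightarrow>
        (\<forall>A\<in>ida_car (Gamma TLa le perp). gamma_map (l \<circ> k) A = gamma_map l (gamma_map k A)))"
proof (intro conjI allI impI ballI)
  fix le :: "'a \<Rightarrow> 'a \<Rightarrow> bool" and perp
  assume "col UNIV le perp"
  then show "toda TPa (Gamma TLa le perp)"
    using Gamma_toda assms(2,9) by blast
next
  fix le :: "'a \<Rightarrow> 'a \<Rightarrow> bool" and perp and le' :: "'b \<Rightarrow> 'b \<Rightarrow> bool" and perp' and k :: "'a \<Rightarrow> 'b"
  assume "col UNIV le perp \<and> col UNIV le' perp' \<and> col_iso le perp le' perp' k"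
  then show "toda_morph (Gamma TLa le perp) (Gamma TLb le' perp') (gamma_map k)"
    using gamma_map_toda_morph assms(2,16,17) by blast
next
  fix le :: "'a \<Rightarrow> 'a \<Rightarrow> bool" and perp A
  show "gamma_map id A = A"
    by (rule gamma_map_id)
next
  fix le :: "'a \<Rightarrow> 'a \<Rightarrow> bool" and perp and le' :: "'b \<Rightarrow> 'b \<Rightarrow> bool" and perp'
    and le'' :: "'c \<Rightarrow> 'c \<Rightarrow> bool" and perp'' and k :: "'a \<Rightarrow> 'b" and l :: "'b \<Rightarrow> 'c" and A
  assume "col UNIV le perp \<and> col UNIV le' perp' \<and> col UNIV le'' perp'' \<and>
    col_iso le perp le' perp' k \<and> col_iso le' perp' le'' perp'' l"
  then show "gamma_map (l \<circ> k) A = gamma_map l (gamma_map k A)"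
    using gamma_map_comp unfolding col_iso_def by blast
qed

end
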